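(* Let $\beta\in(1/2,1)$, $\eta\in(0,1)$ and $a>0$, and assume the coupling below. There exist $c=c(\beta)>0$ and $n_0=n_0(\beta,\eta,a)$ such that for all $n\ge n_0$ and all $u\in[n^{\eta-1},1/2]$, \[ \Pr\Big(\sqrt n\big(\tilde F^{(0)}(u)-\mathbb E\tilde F^{(0)}(u)\big)>a\sqrt{u(1-u)}\Big)\le e^{-a c\, n^{\eta/2}}+e^{-n^{1-(\beta+1/2)/2}} . \]
   Context: $\epsilon_n=n^{-\beta}$. Coupling: $I\subset\{1,\dots,n\}$ random with each $i$ included independently with probability $\epsilon_n$; $Q^{(0)}_1,\dots,Q^{(0)}_n$ i.i.d. $\mathrm{Unif}(0,1)$ independent of $I$. Define $\tilde F^{(0)}(t)=\frac1n\sum_{i\in I}\mathbf 1(Q^{(0)}_i\le t)$ (normalized by $n$, though only $|I|$ terms appear), and $\mathbb E$ denotes unconditional expectation. *)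

theory Defs
  imports "HOL-Probability.Probability"
begin

text \<open>Coupling space for sample size n: outcome omega maps index i < n to
  (i in I, Q_i). Coordinates are independent; i in I with probability eps_n = n powr (-beta),
  Q_i uniform on (0,1).\<close>

definition eps_n :: "real \<Rightarrow> nat \<Rightarrow> real" where
  "eps_n \<beta> n = real n powr (-\<beta>)"

definition coupling_space :: "real \<Rightarrow> nat \<Rightarrow> (nat \<Rightarrow> bool \<times> real) measure" where
  "coupling_space \<beta> n =
     PiM {..<n} (\<lambda>_. measure_pmf (bernoulli_pmf (eps_n \<beta> n)) \<Otimes>\<^sub>M uniform_measure lborel {0<..<1})"

definition F0 :: "nat \<Rightarrow> real \<Rightarrow> (nat \<Rightarrow> bool \<times> real) \<Rightarrow> real" where
  "F0 n t \<omega> = (1 / real n) * (\<Sum>i\<in>{i. i < n \<and> fst (\<omega> i)}. (if snd (\<omega> i) \<le> t then 1 else 0))"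

end

theory Submission
  imports Defs
begin

text \<open>Since \<open>n F0(u)\<close> is a sum of \<open>n\<close> independent indicators of
  \<open>i \<in> I \<and> Q\<^sub>i \<le> u\<close>, each of mean \<open>\<epsilon>\<^sub>n u\<close>, the exponential Markov inequality with
  parameter 1 bounds the tail event by \<open>exp((e - 2) n \<epsilon>\<^sub>n u - a \<surd>n \<surd>(u(1-u)))\<close>.
  For \<open>u \<le> 1/2\<close> the subtracted term is at least \<open>a \<surd>(n u) / 2\<close>, while
  \<open>n \<epsilon>\<^sub>n u \<le> n\<^sup>1\<^sup>/\<^sup>2\<^sup>-\<^sup>\<beta> \<surd>(n u)\<close> is at most a quarter of it once
  \<open>n\<^sup>\<beta>\<^sup>-\<^sup>1\<^sup>/\<^sup>2 \<ge> 4/a\<close>; and \<open>\<surd>(n u) \<ge> n\<^sup>\<eta>\<^sup>/\<^sup>2\<close> because \<open>u \<ge> n\<^sup>\<eta>\<^sup>-\<^sup>1\<close>.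
  This gives the claim with \<open>c = 1/4\<close>, without the second exponential.\<close>

lemma chernoff_bound_sum_indicators:
  fixes K :: "'a measure" and g :: "'a \<Rightarrow> real" and n :: nat
  assumes K: "prob_space K" and g_measurable[measurable]: "g \<in> borel_measurable K"
    and g01: "\<And>x. g x = 0 \<or> g x = 1" and "t \<ge> 0"
  shows "measure (PiM {..<n} (\<lambda>_. K)) {\<omega> \<in> space (PiM {..<n} (\<lambda>_. K)).
            (\<Sum>i<n. g (\<omega> i)) \<ge> n * (\<integral>x. g x \<partial>K) + t}
         \<le> exp ((exp 1 - 2) * n * (\<integral>x. g x \<partial>K) - t)"
proof -
  interpret K: prob_space K by (rule K)
  interpret product_prob_space "\<lambda>_. K" "{..<n}"
    by (simp add: product_prob_space_def product_sigma_finite_def product_prob_space_axioms_def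
        prob_space_imp_sigma_finite K)
  define M where "M = PiM {..<n} (\<lambda>_. K)"
  define p where "p = (\<integral>x. g x \<partial>K)"
  have g_bounded: "\<bar>g x\<bar> \<le> 1" and g_le_one: "g x \<le> 1" for x using g01[of x] by auto
  have g_integrable: "integrable K g"
    using g_bounded by (intro K.integrable_const_bound[where B=1]) auto
  have exp_g: "exp (g x) = 1 + (exp 1 - 1) * g x" for x using g01[of x] by auto
  have "0 \<le> p" unfolding p_def using g01
    by (intro integral_nonneg_AE always_eventually) (metis order.refl zero_le_one)
  have prod_integrable: "integrable M (\<lambda>\<omega>. \<Prod>i<n. exp (g (\<omega> i)))"
  proof -
    have "(\<Prod>i<n. exp (g (x i))) \<le> (\<Prod>i<n. exp 1)" for x
      using g_le_one by (intro prod_mono) auto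
    then show ?thesis unfolding M_def
      by (intro integrable_const_bound[where B="exp 1 ^ n"]) (auto simp: prod_nonneg)
  qed
  have "measure M {\<omega> \<in> space M. (\<Sum>i<n. g (\<omega> i)) \<ge> n * p + t}
        \<le> exp (-1 * (n * p + t)) * (\<integral>\<omega>\<in>space M. exp (1 * (\<Sum>i<n. g (\<omega> i))) \<partial>M)"
    unfolding M_def
  proof (rule P.Chernoff_ineq_ge)
    show "set_integrable (PiM {..<n} (\<lambda>_. K)) (space (PiM {..<n} (\<lambda>_. K)))
            (\<lambda>x. exp (1 * (\<Sum>i<n. g (x i))))"
      using prod_integrable unfolding M_def set_integrable_def
      by (rule Bochner_Integration.integrable_cong[THEN iffD1, rotated 2])
        (auto simp: exp_sum indicator_def)
  qed auto
  also have "(\<integral>\<omega>\<in>space M. exp (1 * (\<Sum>i<n. g (\<omega> i))) \<partial>M) = (\<integral>\<omega>. (\<Prod>i<n. exp (g (\<omega> i))) \<partial>M)"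
    using prod_integrable by (simp add: set_integral_space exp_sum)
  also have "\<dots> = (\<Prod>i<n. (\<integral>x. exp (g x) \<partial>K))"
    unfolding M_def using g_integrable by (intro product_integral_prod) (auto simp: exp_g)
  also have "\<dots> = (1 + (exp 1 - 1) * p) ^ n"
    unfolding exp_g p_def using g_integrable by (simp add: K.prob_space)
  also have "exp (-1 * (n * p + t)) * \<dots> \<le> exp (-1 * (n * p + t)) * exp ((exp 1 - 1) * p) ^ n"
    using \<open>0 \<le> p\<close> by (intro mult_left_mono power_mono exp_ge_add_one_self) auto
  also have "\<dots> = exp ((exp 1 - 2) * n * p - t)"
    by (simp add: exp_of_nat_mult[symmetric] exp_add[symmetric] algebra_simps)
  finally show ?thesis unfolding M_def p_def .
qed

definition marked_uniform :: "real \<Rightarrow> (bool \<times> real) measure" where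
  "marked_uniform \<epsilon> = measure_pmf (bernoulli_pmf \<epsilon>) \<Otimes>\<^sub>M uniform_measure lborel {0<..<1}"

lemma coupling_space_eq_PiM: "coupling_space \<beta> n = PiM {..<n} (\<lambda>_. marked_uniform (eps_n \<beta> n))"
  unfolding coupling_space_def marked_uniform_def ..

lemma prob_space_marked_uniform: "prob_space (marked_uniform \<epsilon>)"
  unfolding marked_uniform_def
  by (intro prob_space_pair prob_space_measure_pmf prob_space_uniform_measure) auto

lemma sets_marked_uniform_Times [measurable]: "{b} \<times> {..u} \<in> sets (marked_uniform \<epsilon>)"
  unfolding marked_uniform_def by (intro pair_measureI) auto

lemma integral_marked_uniform_indicator:
  fixes \<epsilon> u :: real
  assumes "0 \<le> \<epsilon>" "\<epsilon> \<le> 1" and "0 < u" "u < 1"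
  shows "(\<integral>x. indicator ({True} \<times> {..u}) x \<partial>marked_uniform \<epsilon>) = \<epsilon> * u"
proof -
  define U where "U = uniform_measure lborel {0<..<1::real}"
  define B where "B = measure_pmf (bernoulli_pmf \<epsilon>)"
  interpret U: prob_space U unfolding U_def by (intro prob_space_uniform_measure) auto
  have "emeasure (B \<Otimes>\<^sub>M U) ({True} \<times> {..u}) = emeasure B {True} * emeasure U {..u}"
    by (rule U.emeasure_pair_measure_Times) (auto simp: B_def U_def)
  also have "emeasure B {True} = ennreal \<epsilon>"
    unfolding B_def using assms by (simp add: emeasure_pmf_single)
  also have "emeasure U {..u} = ennreal u"
  proof -
    have "{0<..<1} \<inter> {..u} = {0<..u}" using assms by auto
    then show ?thesis unfolding U_def using assms by (simp add: divide_ennreal_def)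
  qed
  finally have "measure (marked_uniform \<epsilon>) ({True} \<times> {..u}) = \<epsilon> * u"
    using assms by (simp add: marked_uniform_def B_def U_def measure_def ennreal_mult[symmetric])
  then show ?thesis by simp
qed

lemma integral_PiM_component:
  fixes f :: "'a \<Rightarrow> real"
  assumes "\<And>j. prob_space (M j)" "finite I" "i \<in> I" and [measurable]: "f \<in> borel_measurable (M i)"
  shows "(\<integral>\<omega>. f (\<omega> i) \<partial>PiM I M) = (\<integral>x. f x \<partial>M i)"
proof -
  interpret product_prob_space M I
    using assms by (simp add: product_prob_space_def product_sigma_finite_def
        product_prob_space_axioms_def prob_space_imp_sigma_finite)
  have "(\<integral>\<omega>. f (\<omega> i) \<partial>PiM I M) = (\<integral>x. f x \<partial>distr (PiM I M) (M i) (\<lambda>\<omega>. \<omega> i))"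
    using \<open>i \<in> I\<close> by (intro integral_distr[symmetric]) auto
  also have "distr (PiM I M) (M i) (\<lambda>\<omega>. \<omega> i) = M i"
    using assms by (intro PiM_component) auto
  finally show ?thesis .
qed

lemma eps_n_nonneg: "0 \<le> eps_n \<beta> n"
  by (simp add: eps_n_def)

lemma eps_n_le_one: "0 \<le> \<beta> \<Longrightarrow> eps_n \<beta> n \<le> 1"
  by (cases "n = 0") (auto simp: eps_n_def powr_minus_divide intro: ge_one_powr_ge_zero)

lemma F0_eq_indicator_sum:
  "F0 n u \<omega> = (\<Sum>i<n. indicator ({True} \<times> {..u}) (\<omega> i)) / real n"
proof -
  have I: "{i. i < n \<and> fst (\<omega> i)} = {i\<in>{..<n}. fst (\<omega> i)}" by auto
  have "indicator ({True} \<times> {..u}) (\<omega> i)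
      = (if fst (\<omega> i) then if snd (\<omega> i) \<le> u then 1 else 0 else 0 :: real)" for i
    by (cases "\<omega> i") (auto simp: indicator_def)
  moreover have "F0 n u \<omega>
      = (\<Sum>i\<in>{i\<in>{..<n}. fst (\<omega> i)}. if snd (\<omega> i) \<le> u then 1 else 0) / real n"
    by (simp only: F0_def I) simp
  ultimately show ?thesis by (simp only: sum.inter_filter[OF finite_lessThan])
qed

lemma integral_F0:
  assumes "0 \<le> \<beta>" "0 < u" "u < 1"
  shows "(\<integral>\<omega>. F0 n u \<omega> \<partial>coupling_space \<beta> n) = eps_n \<beta> n * u"
proof (cases "n = 0")
  case True
  then show ?thesis by (simp add: F0_def eps_n_def)
next
  case False
  define K where "K = marked_uniform (eps_n \<beta> n)"
  define g where "g = (indicator ({True} \<times> {..u}) :: bool \<times> real \<Rightarrow> real)"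
  interpret K: prob_space K unfolding K_def by (rule prob_space_marked_uniform)
  interpret P: prob_space "PiM {..<n} (\<lambda>_. K)" by (intro prob_space_PiM K.prob_space_axioms)
  have g_measurable[measurable]: "g \<in> borel_measurable K" by (simp add: g_def K_def)
  have "integrable (PiM {..<n} (\<lambda>_. K)) (\<lambda>\<omega>. g (\<omega> i))" if "i < n" for i
  proof (rule P.integrable_const_bound[where B=1])
    show "(\<lambda>\<omega>. g (\<omega> i)) \<in> borel_measurable (PiM {..<n} (\<lambda>_. K))"
      using that by (intro measurable_compose[OF _ g_measurable] measurable_component_singleton) auto
  qed (simp add: g_def)
  then have "(\<integral>\<omega>. F0 n u \<omega> \<partial>coupling_space \<beta> n)
      = (\<Sum>i<n. \<integral>\<omega>. g (\<omega> i) \<partial>PiM {..<n} (\<lambda>_. K)) / n"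
    unfolding F0_eq_indicator_sum coupling_space_eq_PiM K_def[symmetric] g_def[symmetric]
    by (simp add: integral_divide_zero)
  also have "\<dots> = (\<Sum>i<n. eps_n \<beta> n * u) / n"
  proof -
    have "(\<integral>x. g x \<partial>K) = eps_n \<beta> n * u"
      unfolding g_def K_def using assms
      by (intro integral_marked_uniform_indicator eps_n_nonneg eps_n_le_one) auto
    then show ?thesis
      using integral_PiM_component[of "\<lambda>_. K" "{..<n}" _ g] K.prob_space_axioms by simp
  qed
  finally show ?thesis using False by simp
qed

lemma F0_upper_tail:
  assumes "0 \<le> \<beta>" "0 < u" "u < 1" "0 \<le> x"
  shows "measure (coupling_space \<beta> n)
           {\<omega> \<in> space (coupling_space \<beta> n).
              sqrt n * (F0 n u \<omega> - (\<integral>\<omega>'. F0 n u \<omega>' \<partial>coupling_space \<beta> n)) > x}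
         \<le> exp ((exp 1 - 2) * n * (eps_n \<beta> n * u) - sqrt n * x)"
proof -
  define K where "K = marked_uniform (eps_n \<beta> n)"
  define g where "g = (indicator ({True} \<times> {..u}) :: bool \<times> real \<Rightarrow> real)"
  define M where "M = coupling_space \<beta> n"
  define p where "p = eps_n \<beta> n * u"
  interpret K: prob_space K unfolding K_def by (rule prob_space_marked_uniform)
  interpret P: prob_space M unfolding M_def coupling_space_eq_PiM K_def[symmetric]
    by (intro prob_space_PiM K.prob_space_axioms)
  have g_measurable[measurable]: "g \<in> borel_measurable K" by (simp add: g_def K_def)
  have g01: "g y = 0 \<or> g y = 1" for y by (simp add: g_def indicator_def)
  have mean: "(\<integral>x. g x \<partial>K) = p"
    unfolding g_def K_def p_def using assms
    by (intro integral_marked_uniform_indicator eps_n_nonneg eps_n_le_one) auto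
  have "{\<omega> \<in> space M. sqrt n * (F0 n u \<omega> - (\<integral>\<omega>'. F0 n u \<omega>' \<partial>M)) > x}
        \<subseteq> {\<omega> \<in> space M. (\<Sum>i<n. g (\<omega> i)) \<ge> n * p + sqrt n * x}"
  proof safe
    fix \<omega> assume "sqrt n * (F0 n u \<omega> - (\<integral>\<omega>'. F0 n u \<omega>' \<partial>M)) > x"
    then have above_mean: "sqrt n * (F0 n u \<omega> - p) > x"
      unfolding M_def p_def using assms by (simp add: integral_F0)
    then have "n > 0" using \<open>0 \<le> x\<close> by (cases "n = 0") auto
    have "(\<Sum>i<n. g (\<omega> i)) - n * p = sqrt n * (sqrt n * (F0 n u \<omega> - p))"
      using \<open>n > 0\<close> by (simp add: F0_eq_indicator_sum g_def field_simps)
    also have "\<dots> \<ge> sqrt n * x" using above_mean by (intro mult_left_mono) auto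
    finally show "n * p + sqrt n * x \<le> (\<Sum>i<n. g (\<omega> i))" by simp
  qed
  then have "measure M {\<omega> \<in> space M. sqrt n * (F0 n u \<omega> - (\<integral>\<omega>'. F0 n u \<omega>' \<partial>M)) > x}
        \<le> measure M {\<omega> \<in> space M. (\<Sum>i<n. g (\<omega> i)) \<ge> n * p + sqrt n * x}"
    unfolding M_def coupling_space_eq_PiM K_def[symmetric]
    by (intro P.finite_measure_mono[unfolded M_def coupling_space_eq_PiM K_def[symmetric]]) measurable
  also have "\<dots> \<le> exp ((exp 1 - 2) * n * p - sqrt n * x)"
    unfolding M_def coupling_space_eq_PiM K_def[symmetric] mean[symmetric]
    using \<open>0 \<le> x\<close> by (intro chernoff_bound_sum_indicators K.prob_space_axioms g_measurable g01) simp
  finally show ?thesis unfolding M_def p_def .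
qed

lemma tail_exponent_bound:
  fixes n :: nat and \<beta> \<eta> a u :: real
  assumes "n \<ge> 1" and "0 < a" and large: "4 / a \<le> real n powr (\<beta> - 1/2)"
    and u_lower: "real n powr (\<eta> - 1) \<le> u" and "u \<le> 1/2"
  shows "(exp 1 - 2) * n * (real n powr (-\<beta>) * u) - sqrt n * (a * sqrt (u * (1 - u)))
         \<le> - a * (1/4) * real n powr (\<eta> / 2)"
proof -
  define s where "s = sqrt (n * u)"
  have "real n > 0" using \<open>n \<ge> 1\<close> by simp
  moreover have "real n powr (\<eta> - 1) > 0" using \<open>n \<ge> 1\<close> by simp
  ultimately have "u > 0" using u_lower by linarith
  have s_lower: "real n powr (\<eta> / 2) \<le> s"
  proof -
    have "real n powr \<eta> = n * real n powr (\<eta> - 1)"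
      using \<open>real n > 0\<close> by (simp add: powr_diff)
    also have "\<dots> \<le> n * u" using u_lower by (intro mult_left_mono) auto
    finally have "sqrt (real n powr \<eta>) \<le> s" unfolding s_def by simp
    then show ?thesis by (simp add: powr_half_sqrt[symmetric] powr_powr)
  qed
  have deviation: "s / 2 \<le> sqrt n * sqrt (u * (1 - u))"
  proof -
    have "sqrt (u / 4) \<le> sqrt (u * (1 - u))"
      using \<open>u \<le> 1/2\<close> \<open>u > 0\<close> by (intro real_sqrt_le_mono) (simp add: field_simps)
    then have "sqrt n * sqrt (u / 4) \<le> sqrt n * sqrt (u * (1 - u))" by (rule mult_left_mono) simp
    then show ?thesis unfolding s_def by (simp add: real_sqrt_mult real_sqrt_divide)
  qed
  have mean: "n * (real n powr (-\<beta>) * u) \<le> a / 4 * s"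
  proof -
    have "real n powr (1/2 - \<beta>) * sqrt n = real n powr ((1/2 - \<beta>) + 1/2)"
      using \<open>real n > 0\<close> by (simp only: powr_add powr_half_sqrt)
    also have "\<dots> = real n powr (1 + (-\<beta>))" by simp
    also have "\<dots> = n * real n powr (-\<beta>)"
      using \<open>real n > 0\<close> by (simp only: powr_add powr_one)
    finally have "n * (real n powr (-\<beta>) * u) = real n powr (1/2 - \<beta>) * (sqrt n * u)"
      by (simp add: mult.assoc)
    also have "\<dots> \<le> real n powr (1/2 - \<beta>) * s"
    proof (intro mult_left_mono)
      have "u \<le> sqrt u"
        using \<open>u > 0\<close> \<open>u \<le> 1/2\<close>
        by (simp add: real_le_rsqrt power2_eq_square mult_le_cancel_left1)
      then show "sqrt n * u \<le> s" unfolding s_def by (simp add: real_sqrt_mult mult_left_mono)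
    qed simp
    also have "real n powr (1/2 - \<beta>) \<le> a / 4"
    proof -
      have "real n powr (1/2 - \<beta>) = 1 / real n powr (\<beta> - 1/2)"
        by (simp add: powr_minus_divide[symmetric])
      also have "\<dots> \<le> 1 / (4 / a)"
        using large \<open>0 < a\<close> \<open>real n > 0\<close> by (intro divide_left_mono) auto
      finally show ?thesis by simp
    qed
    then have "real n powr (1/2 - \<beta>) * s \<le> a / 4 * s"
      by (rule mult_right_mono) (simp add: s_def \<open>u > 0\<close> less_imp_le)
    finally show ?thesis .
  qed
  have "(exp 1 - 2) * n * (real n powr (-\<beta>) * u) \<le> n * (real n powr (-\<beta>) * u)"
    using exp_le exp_ge_add_one_self[of 1] \<open>u > 0\<close>
    by (simp only: mult.assoc) (intro mult_left_le_one_le; simp)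
  moreover have "a * (s / 2) \<le> sqrt n * (a * sqrt (u * (1 - u)))"
    using mult_left_mono[OF deviation, of a] \<open>0 < a\<close> by (simp add: mult_ac)
  moreover have "a * real n powr (\<eta> / 2) \<le> a * s"
    using mult_left_mono[OF s_lower, of a] \<open>0 < a\<close> by simp
  ultimately show ?thesis using mean by linarith
qed

lemma eventually_le_powr_sequentially:
  fixes p C :: real
  assumes "0 < p"
  shows "eventually (\<lambda>n. C \<le> real n powr p) sequentially"
proof -
  define N where "N = max 1 C powr (1 / p)"
  have "eventually (\<lambda>n. N \<le> real n) sequentially"
    using filterlim_real_sequentially by (simp add: filterlim_at_top)
  then show ?thesis
  proof (rule eventually_mono)
    fix n assume "N \<le> real n"
    have "C \<le> N powr p" using \<open>0 < p\<close> by (simp add: N_def powr_powr)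
    also have "\<dots> \<le> real n powr p"
      using \<open>N \<le> real n\<close> \<open>0 < p\<close> by (intro powr_mono2) (auto simp: N_def)
    finally show "C \<le> real n powr p" .
  qed
qed

lemma F0_upper_tail_le_exp:
  assumes "0 \<le> \<beta>" "n \<ge> 1" "0 < a" "4 / a \<le> real n powr (\<beta> - 1/2)"
    and "real n powr (\<eta> - 1) \<le> u" "u \<le> 1/2"
  shows "measure (coupling_space \<beta> n)
           {\<omega> \<in> space (coupling_space \<beta> n).
              sqrt n * (F0 n u \<omega> - (\<integral>\<omega>'. F0 n u \<omega>' \<partial>coupling_space \<beta> n)) > a * sqrt (u * (1 - u))}
         \<le> exp (- a * (1/4) * real n powr (\<eta> / 2))"
proof -
  have "0 < real n powr (\<eta> - 1)" using \<open>n \<ge> 1\<close> by simp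
  then have "0 < u" using assms by linarith
  have "measure (coupling_space \<beta> n)
          {\<omega> \<in> space (coupling_space \<beta> n).
             sqrt n * (F0 n u \<omega> - (\<integral>\<omega>'. F0 n u \<omega>' \<partial>coupling_space \<beta> n)) > a * sqrt (u * (1 - u))}
        \<le> exp ((exp 1 - 2) * n * (eps_n \<beta> n * u) - sqrt n * (a * sqrt (u * (1 - u))))"
    using assms \<open>0 < u\<close> by (intro F0_upper_tail) auto
  also have "\<dots> \<le> exp (- a * (1/4) * real n powr (\<eta> / 2))"
    unfolding exp_le_cancel_iff eps_n_def using assms by (intro tail_exponent_bound) auto
  finally show ?thesis .
qed

lemma F0_upper_tail_eventually:
  assumes "1/2 < \<beta>" "0 < a"
  shows "\<forall>\<^sub>F n in sequentially. \<forall>u. real n powr (\<eta> - 1) \<le> u \<and> u \<le> 1/2 \<longrightarrow>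
           measure (coupling_space \<beta> n)
             {\<omega> \<in> space (coupling_space \<beta> n).
                sqrt n * (F0 n u \<omega> - (\<integral>\<omega>'. F0 n u \<omega>' \<partial>coupling_space \<beta> n)) > a * sqrt (u * (1 - u))}
           \<le> exp (- a * (1/4) * real n powr (\<eta> / 2))"
proof -
  have "0 < \<beta> - 1/2" using assms by simp
  from eventually_ge_at_top[of 1] eventually_le_powr_sequentially[OF this, of "4 / a"]
  show ?thesis
  proof eventually_elim
    case (elim n)
    then show ?case using assms by (intro allI impI F0_upper_tail_le_exp) auto
  qed
qed

theorem lemma11:
  fixes \<beta> :: real
  assumes "1/2 < \<beta>" and "\<beta> < 1"
  shows "\<exists>c>0. \<forall>\<eta> a::real. 0 < \<eta> \<and> \<eta> < 1 \<and> 0 < a \<longrightarrow>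
    (\<exists>n0::nat. \<forall>n\<ge>n0. \<forall>u::real. real n powr (\<eta> - 1) \<le> u \<and> u \<le> 1/2 \<longrightarrow>
       measure (coupling_space \<beta> n)
         {\<omega> \<in> space (coupling_space \<beta> n).
            sqrt (real n) * (F0 n u \<omega> - (\<integral>\<omega>'. F0 n u \<omega>' \<partial>coupling_space \<beta> n))
              > a * sqrt (u * (1 - u))}
       \<le> exp (- a * c * real n powr (\<eta> / 2)) + exp (- (real n powr (1 - (\<beta> + 1/2) / 2))))"
  using F0_upper_tail_eventually[OF assms(1)]
  by (intro exI[of _ "1/4"] conjI allI impI)
    (simp_all add: eventually_sequentially, meson add_increasing2 exp_ge_zero order_trans)

end
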